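(* Let $n\ge 2$ and let $\mathbf{A}\subset\mathbb{R}^{n\times n}$ be a connected set of real matrices. For $A\in\mathbf{A}$ write its characteristic polynomial as $f_A(s)=\det(sI_n-A)=s^n+a_{n-1}s^{n-1}+\cdots+a_1s+a_0$, and let $\Delta_{n-1}$ denote the $(n-1)$-th leading principal minor of the Hurwitz matrix $\Delta_A$ of $f_A$ (all these quantities depend on $A$). Suppose that at least one $A\in\mathbf{A}$ is Hurwitz stable. Then every $A\in\mathbf{A}$ is Hurwitz stable if and only if $a_0>0$ and $\Delta_{n-1}>0$ for all $A\in\mathbf{A}$.
   Context: A real square matrix is Hurwitz stable if all its eigenvalues lie in the open left half of the complex plane. The Hurwitz matrix of $f_A(s)=s^n+a_{n-1}s^{n-1}+\cdots+a_0$ is the $n\times n$ matrix $\Delta_A=(h_{ij})$ with $h_{ij}=a_{n-2j+i}$, where one sets $a_n=1$ and $a_k=0$ for $k<0$ or $k>n$; explicitly its rows are $(a_{n-1},a_{n-3},a_{n-5},\dots)$, $(1,a_{n-2},a_{n-4},\dots)$, $(0,a_{n-1},a_{n-3},\dots)$, $(0,1,a_{n-2},\dots)$, and so on. Its successive leading principal minors are denoted $\Delta_1,\dots,\Delta_n$. *)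

theory Defs
  imports "HOL-Analysis.Analysis" "HOL-Computational_Algebra.Polynomial"
begin

definition charpoly :: "real^'n^'n \<Rightarrow> real poly" where
  "charpoly A = det (\<chi> i j. (if i = j then [:0, 1:] else 0) - [:A $ i $ j:])"

definition hurwitz_stable :: "real^'n^'n \<Rightarrow> bool" where
  "hurwitz_stable A \<longleftrightarrow>
     (\<forall>(z::complex) (v::complex^'n). v \<noteq> 0 \<and>
        (\<chi> i j. complex_of_real (A $ i $ j)) *v v = z *s v \<longrightarrow> Re z < 0)"

definition hcoef :: "nat \<Rightarrow> real poly \<Rightarrow> int \<Rightarrow> real" where
  "hcoef n p k = (if k = int n then 1 else if k < 0 \<or> k > int n then 0 else coeff p (nat k))"

text \<open>Entry h_ij = a_{n-2j+i} of the Hurwitz matrix (1-based indices i, j).\<close>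
definition hurwitz_entry :: "nat \<Rightarrow> real poly \<Rightarrow> nat \<Rightarrow> nat \<Rightarrow> real" where
  "hurwitz_entry n p i j = hcoef n p (int n - 2 * int j + int i)"

definition hurwitz_minor :: "nat \<Rightarrow> real poly \<Rightarrow> nat \<Rightarrow> real" where
  "hurwitz_minor n p m =
     (\<Sum>\<sigma> | \<sigma> permutes {1..m}. of_int (sign \<sigma>) * (\<Prod>i\<in>{1..m}. hurwitz_entry n p i (\<sigma> i)))"

end

theory Submission
  imports Defs "Jordan_Normal_Form.Determinant" "HOL-Computational_Algebra.Polynomial_Factorial"
    "HOL-Computational_Algebra.Field_as_Ring" "HOL-Computational_Algebra.Fundamental_Theorem_Algebra"
begin

(* The proof rests on an algebraic description of the vanishing of Delta_{n-1} for a monic p of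
   degree n: Delta_{n-1}(p) = 0 iff p * W is an even polynomial for some nonzero W of degree at most
   n - 2 (the transposed Hurwitz matrix maps the coefficient vector of W to the odd coefficients
   of p * W).  Two consequences follow:
     (a) a nonzero imaginary root i*w of p forces Delta_{n-1} = 0 (take W = (p / (s^2 + w^2))(-s));
     (b) Delta_{n-1} = 0 forces a pair of opposite roots z, -z (otherwise p(s), p(-s) are coprime).
   Since the roots of the characteristic polynomial depend continuously on the matrix, both the
   stable matrices and the matrices with a root in the open right half plane form open sets.
   Sufficiency: by (a) and a_0 > 0 no matrix of the family has a root on the imaginary axis, so
   the family is split by these two open sets and connectedness gives stability everywhere.
   Necessity: the stable matrices form a star-shaped (hence connected) set around -I on which
   a_0 and Delta_{n-1} never vanish (by (b)); an explicit stable diagonal matrix with rapidly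
   decreasing eigenvalues, whose Hurwitz matrix is dominated by its diagonal, has both positive. *)

section \<open>The Hurwitz minor as a determinant and its kernel\<close>

lemma leibniz_reindex_Suc:
  fixes E :: "nat \<Rightarrow> nat \<Rightarrow> 'a::comm_ring_1"
  shows "(\<Sum>\<sigma> | \<sigma> permutes {1..m}. of_int (sign \<sigma>) * (\<Prod>i\<in>{1..m}. E i (\<sigma> i)))
       = (\<Sum>q | q permutes {0..<m}. of_int (sign q) * (\<Prod>i\<in>{0..<m}. E (Suc i) (Suc (q i))))"
proof -
  have bS: "bij_betw Suc {0..<m} {1..m}"
    by (simp add: bij_betw_def inj_on_def) (metis atLeastLessThanSuc_atLeastAtMost image_Suc_atLeastLessThan)
  have bP: "bij_betw (\<lambda>i. i - 1) {1..m} {0..<m}"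
    unfolding bij_betw_def inj_on_def by (auto simp: image_def intro!: bexI[of _ "Suc _"])
  show ?thesis
  proof (rule sum.reindex_bij_witness[where i="map_permutation {0..<m} Suc" and j="map_permutation {1..m} (\<lambda>i. i - 1)"])
    fix a assume "a \<in> {\<sigma>. \<sigma> permutes {1..m}}"
    hence ap: "a permutes {1..m}" by simp
    have "map_permutation {0..<m} Suc (map_permutation {1..m} (\<lambda>i. i - 1) a)
        = map_permutation {1..m} (Suc \<circ> (\<lambda>i. i - 1)) a"
      by (rule map_permutation_compose[OF bP]) simp
    also have "\<dots> = map_permutation {1..m} id a"
      by (rule map_permutation_cong[OF _ ap]) (auto simp: inj_on_def)
    finally show "map_permutation {0..<m} Suc (map_permutation {1..m} (\<lambda>i. i - 1) a) = a"
      using ap by simp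
    show "map_permutation {1..m} (\<lambda>i. i - 1) a \<in> {q. q permutes {0..<m}}"
      using map_permutation_permutes[OF bP ap] by simp
    have sg: "sign (map_permutation {1..m} (\<lambda>i. i - 1) a) = sign a"
      by (rule sign_map_permutation[OF bij_betw_imp_inj_on[OF bP] ap]) simp
    have pr: "(\<Prod>i\<in>{0..<m}. E (Suc i) (Suc (map_permutation {1..m} (\<lambda>i. i - 1) a i)))
          = (\<Prod>i\<in>{1..m}. E i (a i))"
    proof (rule prod.reindex_bij_witness[where i="\<lambda>i. i - 1" and j=Suc])
      fix i assume "i \<in> {0..<m}"
      hence i1: "Suc i \<in> {1..m}" by simp
      have "map_permutation {1..m} (\<lambda>i. i - 1) a (Suc i - 1) = a (Suc i) - 1"
        using map_permutation_apply[OF bij_betw_imp_inj_on[OF bP] i1] by simp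
      moreover have "a (Suc i) \<in> {1..m}" by (metis ap i1 permutes_in_image)
      ultimately show "E (Suc i) (a (Suc i)) = E (Suc i) (Suc (map_permutation {1..m} (\<lambda>i. i - 1) a i))"
        by simp
    qed auto
    show "of_int (sign (map_permutation {1..m} (\<lambda>i. i - 1) a)) *
          (\<Prod>i\<in>{0..<m}. E (Suc i) (Suc (map_permutation {1..m} (\<lambda>i. i - 1) a i))) =
          of_int (sign a) * (\<Prod>i\<in>{1..m}. E i (a i))" using sg pr by simp
  next
    fix b assume "b \<in> {q. q permutes {0..<m}}"
    hence bp: "b permutes {0..<m}" by simp
    have "map_permutation {1..m} (\<lambda>i. i - 1) (map_permutation {0..<m} Suc b)
        = map_permutation {0..<m} ((\<lambda>i. i - 1) \<circ> Suc) b"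
      by (rule map_permutation_compose[OF bS bij_betw_imp_inj_on[OF bP]])
    also have "\<dots> = map_permutation {0..<m} id b"
      by (rule map_permutation_cong[OF _ bp]) (auto simp: inj_on_def)
    finally show "map_permutation {1..m} (\<lambda>i. i - 1) (map_permutation {0..<m} Suc b) = b"
      using bp by simp
    show "map_permutation {0..<m} Suc b \<in> {\<sigma>. \<sigma> permutes {1..m}}"
      using map_permutation_permutes[OF bS bp] by simp
  qed
qed

definition hurwitz_mat :: "nat \<Rightarrow> real poly \<Rightarrow> nat \<Rightarrow> real mat" where
  "hurwitz_mat n p m = Matrix.mat m m (\<lambda>(i,j). hurwitz_entry n p (Suc i) (Suc j))"

lemma hurwitz_mat_carrier: "hurwitz_mat n p m \<in> carrier_mat m m"
  unfolding hurwitz_mat_def by simp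

lemma hurwitz_minor_det: "hurwitz_minor n p m = Determinant.det (hurwitz_mat n p m)"
  unfolding hurwitz_minor_def hurwitz_mat_def leibniz_reindex_Suc
  by (subst det_def'[of _ m]) auto

lemma hcoef_nonneg:
  assumes "coeff p n = 1" "degree p \<le> n" "l \<ge> 0"
  shows "hcoef n p l = coeff p (nat l)"
proof -
  have "coeff p (nat l) = 0" if "l > int n"
    using that assms(2) by (intro coeff_eq_0) linarith
  thus ?thesis using assms unfolding hcoef_def by (auto simp: not_less)
qed

lemma hcoef_neg: "l < 0 \<Longrightarrow> hcoef n p l = 0"
  unfolding hcoef_def by auto

definition vec_poly :: "nat \<Rightarrow> (nat \<Rightarrow> real) \<Rightarrow> real poly" where
  "vec_poly n c = (\<Sum>i<n-1. monom (c i) (n - 2 - i))"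

lemma coeff_vec_poly:
  assumes "n \<ge> 2"
  shows "coeff (vec_poly n c) k = (if k \<le> n - 2 then c (n - 2 - k) else 0)"
proof -
  have "coeff (vec_poly n c) k = (\<Sum>i<n-1. if i = n - 2 - k \<and> k \<le> n - 2 then c i else 0)"
    unfolding vec_poly_def coeff_sum coeff_monom
    by (rule sum.cong[OF refl]) auto
  also have "\<dots> = (if k \<le> n - 2 then c (n - 2 - k) else 0)"
    using assms by (cases "k \<le> n - 2") (auto simp: sum.delta')
  finally show ?thesis .
qed

lemma degree_vec_poly: "n \<ge> 2 \<Longrightarrow> degree (vec_poly n c) \<le> n - 2"
  by (rule degree_le) (auto simp: coeff_vec_poly)

lemma coeff_mult_vec_poly:
  assumes p: "coeff p n = 1" "degree p \<le> n" and j: "j < n - 1" and n: "n \<ge> 2"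
  shows "coeff (p * vec_poly n c) (2*n - 3 - 2*j)
       = (\<Sum>i<n-1. c i * hurwitz_entry n p (Suc i) (Suc j))"
proof -
  have "coeff (p * vec_poly n c) (2*n - 3 - 2*j)
      = (\<Sum>i<n-1. coeff (monom (c i) (n - 2 - i) * p) (2*n - 3 - 2*j))"
    by (simp add: vec_poly_def mult.commute[of p] sum_distrib_right coeff_sum)
  also have "\<dots> = (\<Sum>i<n-1. c i * hurwitz_entry n p (Suc i) (Suc j))"
  proof (rule sum.cong[OF refl])
    fix i assume "i \<in> {..<n-1}"
    hence i: "i < n - 1" by simp
    have e1: "int (2*n - 3 - 2*j) = 2*int n - 3 - 2*int j" using j n by linarith
    have e2: "int (n - 2 - i) = int n - 2 - int i" using i n by linarith
    show "coeff (monom (c i) (n - 2 - i) * p) (2*n - 3 - 2*j) = c i * hurwitz_entry n p (Suc i) (Suc j)"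
    proof (cases "2*n - 3 - 2*j < n - 2 - i")
      case True
      hence "int (2*n - 3 - 2*j) < int (n - 2 - i)" by linarith
      hence "int n - 2 * int (Suc j) + int (Suc i) < 0" unfolding e1 e2 by simp
      thus ?thesis using True by (simp add: coeff_monom_mult hurwitz_entry_def hcoef_neg)
    next
      case False
      hence "int (2*n - 3 - 2*j) \<ge> int (n - 2 - i)" by linarith
      hence ge: "int n - 2 * int (Suc j) + int (Suc i) \<ge> 0" unfolding e1 e2 by simp
      have "int (2*n - 3 - 2*j - (n - 2 - i)) = int (2*n - 3 - 2*j) - int (n - 2 - i)"
        using False by linarith
      hence eq: "nat (int n - 2 * int (Suc j) + int (Suc i)) = 2*n - 3 - 2*j - (n - 2 - i)"
        unfolding e1 e2 by simp
      have "hurwitz_entry n p (Suc i) (Suc j) = coeff p (2*n - 3 - 2*j - (n - 2 - i))"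
        unfolding hurwitz_entry_def hcoef_nonneg[OF p ge] eq ..
      thus ?thesis using False by (simp add: coeff_monom_mult)
    qed
  qed
  finally show ?thesis .
qed

lemma hurwitz_transpose_apply:
  assumes p: "coeff p n = 1" "degree p \<le> n" and n: "n \<ge> 2"
    and v: "v \<in> carrier_vec (n - 1)" and j: "j < n - 1"
  shows "(transpose_mat (hurwitz_mat n p (n - 1)) *\<^sub>v v) $ j
       = coeff (p * vec_poly n (\<lambda>i. v $ i)) (2*n - 3 - 2*j)"
  unfolding coeff_mult_vec_poly[OF p j n] using v j unfolding hurwitz_mat_def
  by (auto simp: scalar_prod_def mult.commute lessThan_atLeast0 intro!: sum.cong)

lemma hurwitz_minor_zero_imp_even_multiple:
  assumes p: "coeff p n = 1" "degree p \<le> n" and n: "n \<ge> 2"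
    and zero: "hurwitz_minor n p (n - 1) = 0"
  shows "\<exists>W. W \<noteq> 0 \<and> degree W \<le> n - 2 \<and> (\<forall>k. odd k \<longrightarrow> coeff (p * W) k = 0)"
proof -
  let ?M = "transpose_mat (hurwitz_mat n p (n - 1))"
  have "Determinant.det ?M = 0"
    using zero unfolding hurwitz_minor_det det_transpose[OF hurwitz_mat_carrier] .
  then obtain v where v: "v \<in> carrier_vec (n - 1)" "v \<noteq> 0\<^sub>v (n - 1)" "?M *\<^sub>v v = 0\<^sub>v (n - 1)"
    using det_0_iff_vec_prod_zero_field[of ?M "n - 1"] hurwitz_mat_carrier[of n p "n - 1"] by auto
  define W where "W = vec_poly n (\<lambda>i. v $ i)"
  obtain i where i: "i < n - 1" "v $ i \<noteq> 0" using v(1,2) by (auto simp: vec_eq_iff)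
  have "coeff W (n - 2 - i) = v $ (n - 2 - (n - 2 - i))"
    unfolding W_def coeff_vec_poly[OF n] by simp
  also have "n - 2 - (n - 2 - i) = i" using i by linarith
  finally have W0: "W \<noteq> 0" using i by auto
  have dW: "degree W \<le> n - 2" unfolding W_def by (rule degree_vec_poly[OF n])
  have "coeff (p * W) k = 0" if k: "odd k" for k
  proof (cases "k \<le> 2*n - 3")
    case True
    define j where "j = (2*n - 3 - k) div 2"
    have j: "j < n - 1" "2*n - 3 - 2*j = k" using True k n unfolding j_def by (auto elim!: oddE)
    have "(?M *\<^sub>v v) $ j = 0" using v(3) j by simp
    thus ?thesis using hurwitz_transpose_apply[OF p n v(1) j(1)] j(2) W_def by simp
  next
    case False
    have "degree (p * W) \<le> n + (n - 2)"
      using degree_mult_le[of p W] p(2) dW by linarith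
    moreover obtain r where "k = 2*r + 1" using k by (auto elim!: oddE)
    ultimately show ?thesis using False n by (intro coeff_eq_0) presburger
  qed
  thus ?thesis using W0 dW by blast
qed

lemma vec_poly_coeffs:
  assumes n: "n \<ge> 2" and W: "degree W \<le> n - 2"
  shows "vec_poly n (\<lambda>i. coeff W (n - 2 - i)) = W"
proof (rule poly_eqI)
  fix k
  show "coeff (vec_poly n (\<lambda>i. coeff W (n - 2 - i))) k = coeff W k"
  proof (cases "k \<le> n - 2")
    case True
    hence "n - 2 - (n - 2 - k) = k" by linarith
    thus ?thesis unfolding coeff_vec_poly[OF n] using True by simp
  next
    case False
    hence "coeff W k = 0" using W by (intro coeff_eq_0) linarith
    thus ?thesis unfolding coeff_vec_poly[OF n] using False by simp
  qed
qed

lemma even_multiple_imp_hurwitz_minor_zero: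
  assumes p: "coeff p n = 1" "degree p \<le> n" and n: "n \<ge> 2"
    and W: "W \<noteq> 0" "degree W \<le> n - 2" "\<forall>k. odd k \<longrightarrow> coeff (p * W) k = 0"
  shows "hurwitz_minor n p (n - 1) = 0"
proof -
  let ?M = "transpose_mat (hurwitz_mat n p (n - 1))"
  define v where "v = vec (n - 1) (\<lambda>i. coeff W (n - 2 - i))"
  have vc: "v \<in> carrier_vec (n - 1)" unfolding v_def by simp
  have "vec_poly n (\<lambda>i. v $ i) = vec_poly n (\<lambda>i. coeff W (n - 2 - i))"
    unfolding vec_poly_def v_def by (intro sum.cong) auto
  hence Wv: "vec_poly n (\<lambda>i. v $ i) = W" using vec_poly_coeffs[OF n W(2)] by simp
  have v0: "v \<noteq> 0\<^sub>v (n - 1)"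
  proof
    assume "v = 0\<^sub>v (n - 1)"
    hence "vec_poly n (\<lambda>i. v $ i) = vec_poly n (\<lambda>i. 0)"
      unfolding vec_poly_def by (intro sum.cong) auto
    thus False using Wv W(1) by (simp add: vec_poly_def)
  qed
  have "?M *\<^sub>v v = 0\<^sub>v (n - 1)"
  proof (rule eq_vecI)
    fix j assume "j < dim_vec (0\<^sub>v (n - 1) :: real vec)"
    hence j: "j < n - 1" by simp
    have "2*n - 3 - 2*j = 2*(n - 2 - j) + 1" using j n by linarith
    hence "odd (2*n - 3 - 2*j)" by simp
    thus "(?M *\<^sub>v v) $ j = 0\<^sub>v (n - 1) $ j"
      using hurwitz_transpose_apply[OF p n vc j] Wv W(3) j by simp
  qed (simp add: hurwitz_mat_def)
  hence "Determinant.det ?M = 0"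
    using det_0_iff_vec_prod_zero_field[of ?M "n - 1"] hurwitz_mat_carrier[of n p "n - 1"] vc v0
    by auto
  thus ?thesis unfolding hurwitz_minor_det det_transpose[OF hurwitz_mat_carrier] .
qed

section \<open>Roots forcing, and forced by, the vanishing of \<open>Delta_(n-1)\<close>\<close>

lemma coeff_reflect: "coeff (pcompose p [:0, -1:]) k = (-1)^k * coeff (p :: 'a :: comm_ring_1 poly) k"
  using coeff_pcompose_linear[of p "-1" k] by simp

lemma even_poly_iff:
  fixes E :: "'a :: field_char_0 poly"
  shows "pcompose E [:0, -1:] = E \<longleftrightarrow> (\<forall>k. odd k \<longrightarrow> coeff E k = 0)"
proof
  assume h: "pcompose E [:0, -1:] = E"
  show "\<forall>k. odd k \<longrightarrow> coeff E k = 0"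
  proof (intro allI impI)
    fix k :: nat assume "odd k"
    hence "coeff E k = - coeff E k" using arg_cong[OF h, of "\<lambda>p. coeff p k"]
      unfolding coeff_reflect by simp
    thus "coeff E k = 0" by simp
  qed
next
  assume h: "\<forall>k. odd k \<longrightarrow> coeff E k = 0"
  show "pcompose E [:0, -1:] = E"
  proof (rule poly_eqI)
    fix k show "coeff (pcompose E [:0, -1:]) k = coeff E k"
      by (cases "even k") (simp_all add: coeff_reflect h)
  qed
qed

lemma map_of_real_mult:
  "map_poly complex_of_real (p * q) = map_poly complex_of_real p * map_poly complex_of_real q"
  by (rule poly_eqI) (simp add: coeff_map_poly coeff_mult)

lemma map_of_real_add:
  "map_poly complex_of_real (p + q) = map_poly complex_of_real p + map_poly complex_of_real q"
  by (rule poly_eqI) (simp add: coeff_map_poly)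

lemma imag_root_imp_dvd:
  fixes p :: "real poly"
  assumes w: "w \<noteq> 0" and root: "poly (map_poly complex_of_real p) (\<i> * complex_of_real w) = 0"
  shows "[:w^2, 0, 1:] dvd p"
proof -
  define q :: "real poly" where "q = [:w^2, 0, 1:]"
  define r where "r = p mod q"
  have q0: "q \<noteq> 0" unfolding q_def by simp
  have pdr: "p = p div q * q + r" unfolding r_def by simp
  have "degree r < 2" using degree_mod_less[OF q0, of p] unfolding r_def q_def
    by (cases "p mod [:w^2, 0, 1:] = 0") auto
  hence r_eq: "r = [:coeff r 0, coeff r 1:]"
    by (intro poly_eqI) (auto simp: coeff_pCons coeff_eq_0 split: nat.splits)
  let ?z = "\<i> * complex_of_real w"
  have "poly (map_poly complex_of_real q) ?z = 0"
    unfolding q_def by (simp add: map_poly_pCons power2_eq_square algebra_simps)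
  hence "poly (map_poly complex_of_real r) ?z = 0"
    using root by (subst (asm) pdr) (simp add: map_of_real_mult map_of_real_add)
  hence "complex_of_real (coeff r 0) + ?z * complex_of_real (coeff r 1) = 0"
    by (subst (asm) r_eq) (simp add: map_poly_pCons)
  hence "coeff r 0 = 0 \<and> w * coeff r 1 = 0"
    by (simp add: complex_eq_iff)
  hence "r = 0" using w by (subst r_eq) simp
  thus ?thesis unfolding q_def r_def by (simp add: mod_eq_0_iff_dvd)
qed

text \<open>Writing
  \<open>p = (s^2 + w^2) d\<close>, the multiplier \<open>W(s) = d(-s)\<close> makes \<open>p W\<close> even.\<close>
lemma hurwitz_minor_zero_if_imag_root:
  assumes p: "coeff p n = 1" "degree p \<le> n" and n: "n \<ge> 2" and w: "w \<noteq> 0"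
    and root: "poly (map_poly complex_of_real p) (\<i> * complex_of_real w) = 0"
  shows "hurwitz_minor n p (n - 1) = 0"
proof -
  define q :: "real poly" where "q = [:w^2, 0, 1:]"
  obtain d where pdq: "p = q * d" using imag_root_imp_dvd[OF w root] unfolding q_def by blast
  have "p \<noteq> 0" using p(1) by auto
  hence d0: "d \<noteq> 0" using pdq by auto
  have "q \<noteq> 0" "degree q = 2" unfolding q_def by auto
  hence "degree p = degree d + 2" using pdq d0 by (simp add: degree_mult_eq)
  hence dd: "degree d \<le> n - 2" using p(2) by linarith
  define W where "W = pcompose d [:0, -1:]"
  have W0: "W \<noteq> 0" unfolding W_def using d0 pcompose_eq_0[of d "[:0,-1:]"] by auto
  have dW: "degree W \<le> n - 2" unfolding W_def degree_pcompose using dd by simp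
  have qq: "pcompose q [:0, -1:] = q" unfolding q_def by (simp add: pcompose_pCons)
  have WW: "pcompose W [:0, -1:] = d"
    unfolding W_def pcompose_assoc[symmetric] by (simp add: pcompose_pCons)
  have "pcompose (p * W) [:0, -1:] = p * W"
    unfolding pdq pcompose_mult qq WW by (simp add: W_def mult_ac)
  hence "\<forall>k. odd k \<longrightarrow> coeff (p * W) k = 0" using even_poly_iff by blast
  thus ?thesis using even_multiple_imp_hurwitz_minor_zero[OF p n W0 dW] by blast
qed

lemma coprime_reflect:
  fixes P :: "complex poly"
  assumes P0: "P \<noteq> 0" and no_pair: "\<nexists>z. poly P z = 0 \<and> poly P (-z) = 0"
  shows "coprime P (pcompose P [:0, -1:])"
proof -
  let ?g = "gcd P (pcompose P [:0, -1:])"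
  have g0: "?g \<noteq> 0" using P0 by simp
  have "degree ?g = 0"
  proof (rule ccontr)
    assume "degree ?g \<noteq> 0"
    hence "\<not> constant (poly ?g)" by (simp add: constant_degree)
    then obtain z where "poly ?g z = 0" using fundamental_theorem_of_algebra by blast
    hence zg: "[:-z,1:] dvd ?g" by (simp add: poly_eq_0_iff_dvd)
    have "[:-z,1:] dvd P" using zg gcd_dvd1 by (rule dvd_trans)
    moreover have "[:-z,1:] dvd pcompose P [:0, -1:]" using zg gcd_dvd2 by (rule dvd_trans)
    ultimately have "poly P z = 0" "poly P (-z) = 0"
      by (simp_all add: poly_eq_0_iff_dvd[symmetric] poly_pcompose)
    thus False using no_pair by blast
  qed
  hence "is_unit ?g" using is_unit_iff_degree[OF g0] by blast
  thus ?thesis using is_unit_gcd by blast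
qed

text \<open>Otherwise, with \<open>P\<close>
  the complexification, \<open>P(s) W(s) = P(-s) W(-s)\<close> and coprimality give \<open>P(s) | W(-s)\<close>,
  impossible for degree reasons.\<close>
lemma hurwitz_minor_zero_imp_opposite_roots:
  assumes p: "coeff p n = 1" "degree p \<le> n" and n: "n \<ge> 2"
    and zero: "hurwitz_minor n p (n - 1) = 0"
  shows "\<exists>z. poly (map_poly complex_of_real p) z = 0 \<and> poly (map_poly complex_of_real p) (-z) = 0"
proof (rule ccontr)
  assume no_pair: "\<not> ?thesis"
  obtain W where W: "W \<noteq> 0" "degree W \<le> n - 2" "\<forall>k. odd k \<longrightarrow> coeff (p * W) k = 0"
    using hurwitz_minor_zero_imp_even_multiple[OF p n zero] by blast
  define P where "P = map_poly complex_of_real p"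
  define V where "V = map_poly complex_of_real W"
  define P' where "P' = pcompose P [:0, -1:]"
  define V' where "V' = pcompose V [:0, -1:]"
  have "\<forall>k. odd k \<longrightarrow> coeff (P * V) k = 0"
    using W(3) unfolding P_def V_def map_of_real_mult[symmetric] by (simp add: coeff_map_poly)
  hence "pcompose (P * V) [:0,-1:] = P * V" using even_poly_iff by blast
  hence PV: "P' * V' = P * V" unfolding P'_def V'_def pcompose_mult by simp
  have "coeff P n = 1" using p(1) unfolding P_def by (simp add: coeff_map_poly)
  hence P0: "P \<noteq> 0" and "degree P \<ge> n" by (auto intro: le_degree)
  hence dP: "degree P = n" using p(2) unfolding P_def by (simp add: degree_map_poly)
  have "V \<noteq> 0" using W(1) unfolding V_def by (simp add: map_poly_eq_0_iff)
  hence V'0: "V' \<noteq> 0" unfolding V'_def using pcompose_eq_0[of V "[:0,-1:]"] by auto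
  have dV': "degree V' \<le> n - 2"
    unfolding V'_def V_def degree_pcompose using W(2) by (simp add: degree_map_poly)
  have "coprime P P'" unfolding P'_def
    by (rule coprime_reflect[OF P0]) (use no_pair in \<open>auto simp: P_def\<close>)
  moreover have "P dvd V' * P'" unfolding mult.commute[of V'] PV by simp
  ultimately have "P dvd V'" using coprime_dvd_mult_left_iff by blast
  hence "degree P \<le> degree V'" using V'0 by (rule dvd_imp_degree_le)
  thus False using dP dV' n by linarith
qed

section \<open>The characteristic polynomial\<close>

definition char_mat :: "real^'n^'n \<Rightarrow> real poly^'n^'n" where
  "char_mat A = (\<chi> i j. (if i = j then [:0, 1:] else 0) - [:A $ i $ j:])"

definition cpoly :: "real^'n^'n \<Rightarrow> complex poly" where
  "cpoly A = map_poly complex_of_real (charpoly A)"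

lemma charpoly_char_mat: "charpoly A = Determinants.det (char_mat A)"
  unfolding charpoly_def char_mat_def ..

lemma degree_char_mat_prod:
  fixes A :: "real^'n^'n"
  shows "degree (\<Prod>i\<in>UNIV. char_mat A $ i $ p i) \<le> card {i. p i = i}"
proof -
  have "degree (\<Prod>i\<in>UNIV. char_mat A $ i $ p i) \<le> (\<Sum>i\<in>UNIV. degree (char_mat A $ i $ p i))"
    using degree_prod_sum_le[of UNIV "\<lambda>i. char_mat A $ i $ p i"] by (simp add: o_def)
  also have "\<dots> \<le> (\<Sum>i\<in>UNIV. (if p i = i then 1 else 0))"
    by (rule sum_mono) (auto simp: char_mat_def)
  also have "\<dots> = card {i. p i = i}" by (simp add: sum.If_cases)
  finally show ?thesis .
qed

lemma coeff_charpoly_leibniz: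
  "coeff (charpoly (A :: real^'n^'n)) k = (\<Sum>p | p permutes (UNIV::'n set).
      of_int (sign p) * coeff (\<Prod>i\<in>UNIV. char_mat A $ i $ p i) k)"
  unfolding charpoly_char_mat Determinants.det_def coeff_sum
  by (rule sum.cong) (auto simp: of_int_poly coeff_mult)

lemma degree_charpoly: "degree (charpoly (A :: real^'n^'n)) \<le> CARD('n)"
proof (rule degree_le, intro allI impI)
  fix k assume k: "CARD('n) < k"
  have "degree (\<Prod>i\<in>UNIV. char_mat A $ i $ p i) < k" for p :: "'n \<Rightarrow> 'n"
    using degree_char_mat_prod[of A p] card_mono[of UNIV "{i. p i = i}"] k by simp
  thus "coeff (charpoly A) k = 0"
    unfolding coeff_charpoly_leibniz by (intro sum.neutral) (simp add: coeff_eq_0)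
qed

text \<open>Only the identity permutation reaches degree \<open>n\<close>, so the characteristic polynomial is monic.\<close>
lemma charpoly_coeff_n: "coeff (charpoly (A :: real^'n^'n)) CARD('n) = 1"
proof -
  let ?n = "CARD('n)"
  let ?T = "\<lambda>p. of_int (sign p) * coeff (\<Prod>i\<in>UNIV. char_mat A $ i $ p i) ?n"
  have "coeff (charpoly A) ?n = ?T id + (\<Sum>p \<in> {p. p permutes (UNIV::'n set)} - {id}. ?T p)"
    unfolding coeff_charpoly_leibniz
    by (rule sum.remove) (auto simp: permutes_id finite_permutations)
  also have "(\<Sum>p \<in> {p. p permutes (UNIV::'n set)} - {id}. ?T p) = 0"
  proof (rule sum.neutral, intro ballI)
    fix p assume "p \<in> {p. p permutes (UNIV::'n set)} - {id}"
    then obtain j where j: "p j \<noteq> j" by (auto simp: fun_eq_iff)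
    have "card {i. p i = i} < ?n"
      by (rule psubset_card_mono) (use j in auto)
    thus "?T p = 0" using degree_char_mat_prod[of A p] by (simp add: coeff_eq_0)
  qed
  also have "?T id = 1"
  proof -
    have "(\<Prod>i\<in>UNIV. char_mat A $ i $ id i) = (\<Prod>i\<in>UNIV. [:- A $ i $ i, 1:])"
      by (simp add: char_mat_def)
    moreover have "degree (\<Prod>i\<in>UNIV. [:- A $ i $ i, 1:]) = ?n"
      by (subst degree_prod_sum_eq) auto
    moreover have "lead_coeff (\<Prod>i\<in>UNIV. [:- A $ i $ i, 1:]) = 1"
      by (simp add: lead_coeff_prod)
    ultimately show ?thesis by simp
  qed
  finally show ?thesis by simp
qed

lemma cpoly_coeff_n: "coeff (cpoly (A::real^'n^'n)) CARD('n) = 1"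
  unfolding cpoly_def by (simp add: coeff_map_poly charpoly_coeff_n)

lemma degree_cpoly: "degree (cpoly (A::real^'n^'n)) = CARD('n)"
proof -
  have "degree (cpoly A) \<ge> CARD('n)" using cpoly_coeff_n[of A] by (intro le_degree) simp
  moreover have "degree (cpoly A) \<le> CARD('n)" unfolding cpoly_def
    using degree_charpoly[of A] by (simp add: degree_map_poly)
  ultimately show ?thesis by simp
qed

lemma lead_cpoly: "lead_coeff (cpoly (A::real^'n^'n)) = 1"
  using cpoly_coeff_n[of A] degree_cpoly[of A] by simp

definition ev :: "complex \<Rightarrow> real poly \<Rightarrow> complex" where
  "ev z q = poly (map_poly complex_of_real q) z"

lemma ev_add: "ev z (p + q) = ev z p + ev z q"
  unfolding ev_def map_of_real_add by simp

lemma ev_mult: "ev z (p * q) = ev z p * ev z q"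
  unfolding ev_def map_of_real_mult by simp

lemma ev_sum: "ev z (\<Sum>i\<in>S. f i) = (\<Sum>i\<in>S. ev z (f i))"
  by (induct S rule: infinite_finite_induct) (simp_all add: ev_add ev_def[of _ 0])

lemma ev_prod: "ev z (\<Prod>i\<in>S. f i) = (\<Prod>i\<in>S. ev z (f i))"
  by (induct S rule: infinite_finite_induct) (simp_all add: ev_mult ev_def[of _ 1])

lemma ev_of_int: "ev z (of_int k) = of_int k"
  unfolding ev_def by (simp add: of_int_poly map_poly_pCons)

definition cmat :: "real^'n^'n \<Rightarrow> complex^'n^'n" where
  "cmat A = (\<chi> i j. complex_of_real (A $ i $ j))"

definition zmat :: "complex \<Rightarrow> real^'n^'n \<Rightarrow> complex^'n^'n" where
  "zmat z A = (\<chi> i j. (if i = j then z else 0) - complex_of_real (A $ i $ j))"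

lemma hurwitz_stable_cmat:
  "hurwitz_stable A \<longleftrightarrow> (\<forall>z v. v \<noteq> 0 \<and> cmat A *v v = z *s v \<longrightarrow> Re z < 0)"
  unfolding hurwitz_stable_def cmat_def by blast

lemma poly_cpoly_det: "poly (cpoly A) z = Determinants.det (zmat z A)"
proof -
  have e: "ev z (char_mat A $ i $ j) = zmat z A $ i $ j" for i j
    unfolding char_mat_def zmat_def by (auto simp: ev_def map_poly_pCons)
  have "poly (cpoly A) z = ev z (charpoly A)" unfolding cpoly_def ev_def ..
  also have "\<dots> = Determinants.det (zmat z A)"
    unfolding charpoly_char_mat Determinants.det_def ev_sum ev_mult ev_prod ev_of_int e ..
  finally show ?thesis .
qed

lemma zmat_mult: "zmat z A *v v = z *s v - cmat A *v v"
  by (simp add: Finite_Cartesian_Product.vec_eq_iff zmat_def cmat_def matrix_vector_mult_def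
      left_diff_distrib sum_subtractf if_distrib[of "\<lambda>x. x * _"] cong: if_cong)

lemma eigen_iff_root:
  fixes A :: "real^'n^'n"
  shows "(\<exists>v. v \<noteq> 0 \<and> cmat A *v v = z *s v) \<longleftrightarrow> poly (cpoly A) z = 0"
proof -
  have "poly (cpoly A) z \<noteq> 0 \<longleftrightarrow> (\<forall>x. zmat z A *v x = 0 \<longrightarrow> x = 0)"
    unfolding poly_cpoly_det invertible_det_nz[symmetric] invertible_left_inverse
      matrix_left_invertible_ker ..
  moreover have "zmat z A *v x = 0 \<longleftrightarrow> cmat A *v x = z *s x" for x
    unfolding zmat_mult by (auto simp: algebra_simps)
  ultimately show ?thesis by auto
qed

lemma stable_iff_roots:
  "hurwitz_stable A \<longleftrightarrow> (\<forall>z. poly (cpoly A) z = 0 \<longrightarrow> Re z < 0)"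
  unfolding hurwitz_stable_cmat using eigen_iff_root[of A] by blast

definition poly_continuous_on :: "'b::topological_space set \<Rightarrow> ('b \<Rightarrow> real poly) \<Rightarrow> bool" where
  "poly_continuous_on S F \<longleftrightarrow> (\<forall>k. continuous_on S (\<lambda>x. coeff (F x) k))"

lemma poly_continuous_on_const: "poly_continuous_on S (\<lambda>x. c)"
  unfolding poly_continuous_on_def by (auto intro!: continuous_intros)

lemma poly_continuous_on_diff:
  "poly_continuous_on S F \<Longrightarrow> poly_continuous_on S G \<Longrightarrow> poly_continuous_on S (\<lambda>x. F x - G x)"
  unfolding poly_continuous_on_def by (auto intro!: continuous_intros)

lemma poly_continuous_on_mult:
  "poly_continuous_on S F \<Longrightarrow> poly_continuous_on S G \<Longrightarrow> poly_continuous_on S (\<lambda>x. F x * G x)"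
  unfolding poly_continuous_on_def coeff_mult by (auto intro!: continuous_intros)

lemma poly_continuous_on_sum:
  "(\<And>i. i \<in> I \<Longrightarrow> poly_continuous_on S (F i)) \<Longrightarrow> poly_continuous_on S (\<lambda>x. \<Sum>i\<in>I. F i x)"
proof (induct I rule: infinite_finite_induct)
  case (insert a I)
  thus ?case unfolding poly_continuous_on_def by (auto intro!: continuous_intros)
qed (auto intro: poly_continuous_on_const)

lemma poly_continuous_on_prod:
  "(\<And>i. i \<in> I \<Longrightarrow> poly_continuous_on S (F i)) \<Longrightarrow> poly_continuous_on S (\<lambda>x. \<Prod>i\<in>I. F i x)"
proof (induct I rule: infinite_finite_induct)
  case (insert a I) thus ?case by (auto intro!: poly_continuous_on_mult)
qed (auto intro: poly_continuous_on_const)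

lemma poly_continuous_on_char_mat: "poly_continuous_on S (\<lambda>A::real^'n^'n. char_mat A $ i $ j)"
proof -
  have "poly_continuous_on S (\<lambda>A::real^'n^'n. [:A $ i $ j:])"
    unfolding poly_continuous_on_def
  proof
    fix k show "continuous_on S (\<lambda>x::real^'n^'n. coeff [:x$i$j:] k)"
      by (cases k) (auto intro!: continuous_intros)
  qed
  thus ?thesis unfolding char_mat_def
    by (simp add: poly_continuous_on_diff[OF poly_continuous_on_const])
qed

lemma continuous_on_coeff_charpoly: "continuous_on S (\<lambda>A::real^'n^'n. coeff (charpoly A) k)"
proof -
  have "poly_continuous_on S (\<lambda>A::real^'n^'n. charpoly A)"
    unfolding charpoly_char_mat Determinants.det_def
    by (intro poly_continuous_on_sum poly_continuous_on_mult poly_continuous_on_const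
        poly_continuous_on_prod poly_continuous_on_char_mat)
  thus ?thesis unfolding poly_continuous_on_def by blast
qed

lemma continuous_on_hurwitz_minor:
  "continuous_on S (\<lambda>A::real^'n^'n. hurwitz_minor n (charpoly A) m)"
proof -
  have "continuous_on S (\<lambda>A::real^'n^'n. hcoef n (charpoly A) k)" for k
    unfolding hcoef_def by (cases "k = int n \<or> k < 0 \<or> k > int n")
      (auto intro!: continuous_intros continuous_on_coeff_charpoly)
  thus ?thesis unfolding hurwitz_minor_def hurwitz_entry_def
    by (intro continuous_intros)
qed

section \<open>Continuous dependence of the roots on the matrix\<close>

lemma poly_sum_upto:
  fixes p :: "'a::{comm_semiring_0,semiring_1} poly"
  shows "degree p \<le> N \<Longrightarrow> poly p x = (\<Sum>i\<le>N. coeff p i * x ^ i)"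
  unfolding poly_altdef by (rule sum.mono_neutral_left) (auto simp: coeff_eq_0)

text \<open>If a monic polynomial is small at \<open>z\<close>, then \<open>z\<close> is near a root: \<open>|P(z)|\<close> is the product of
  the distances from \<open>z\<close> to the roots.\<close>
lemma small_value_near_root:
  fixes P :: "complex poly"
  assumes lc: "lead_coeff P = 1" and e: "e > 0" and small: "norm (poly P z) < e ^ degree P"
  shows "\<exists>x. poly P x = 0 \<and> norm (z - x) < e"
proof (rule ccontr)
  assume nx: "\<not> ?thesis"
  obtain r where r: "Polynomial.smult (lead_coeff P) (\<Prod>i<degree P. [:-r i, 1:]) = P"
    using complex_poly_decompose' by blast
  hence Pr: "P = (\<Prod>i<degree P. [:-r i, 1:])" using lc by simp
  have root: "poly P (r i) = 0" if "i < degree P" for i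
  proof -
    have "poly P (r i) = (\<Prod>j<degree P. r i - r j)" by (subst Pr) (simp add: poly_prod)
    also have "\<dots> = 0" using that by (intro prod_zero) auto
    finally show ?thesis .
  qed
  have far: "norm (z - r i) \<ge> e" if "i < degree P" for i
    using nx root[OF that] by (auto simp: not_less)
  have "norm (poly P z) = (\<Prod>i<degree P. norm (z - r i))"
    by (subst Pr) (simp add: poly_prod prod_norm)
  also have "\<dots> \<ge> (\<Prod>i<degree P. e)"
    by (rule prod_mono) (use e far in auto)
  finally show False using small by simp
qed

lemma cauchy_bound:
  fixes P :: "complex poly"
  assumes c: "coeff P d = 1" and dg: "degree P = d" and w: "poly P w = 0"
  shows "norm w \<le> max 1 (\<Sum>k<d. norm (coeff P k))"
proof (rule ccontr)
  let ?B = "\<Sum>k<d. norm (coeff P k)"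
  assume "\<not> ?thesis"
  hence w1: "norm w > 1" and wB: "norm w > ?B" by auto
  have "0 = poly P w" using w by simp
  also have "\<dots> = (\<Sum>k\<le>d. coeff P k * w ^ k)" using dg by (simp add: poly_sum_upto)
  also have "\<dots> = (\<Sum>k<d. coeff P k * w ^ k) + w ^ d" using c by (simp add: lessThan_Suc_atMost[symmetric])
  finally have eq: "w ^ d = - (\<Sum>k<d. coeff P k * w ^ k)" by (simp add: eq_neg_iff_add_eq_0 add.commute)
  have d0: "d > 0" using eq by (cases d) auto
  have "norm w ^ d = norm (w ^ d)" by (simp add: norm_power)
  also have "\<dots> = norm (\<Sum>k<d. coeff P k * w ^ k)" unfolding eq norm_minus_cancel ..
  also have "\<dots> \<le> (\<Sum>k<d. norm (coeff P k) * norm w ^ k)"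
    by (rule order_trans[OF norm_sum]) (simp add: norm_mult norm_power)
  also have "\<dots> \<le> (\<Sum>k<d. norm (coeff P k) * norm w ^ (d - 1))"
    by (rule sum_mono, rule mult_left_mono, rule power_increasing) (use w1 in auto)
  also have "\<dots> = ?B * norm w ^ (d - 1)" by (simp add: sum_distrib_right)
  also have "\<dots> < norm w * norm w ^ (d - 1)"
    by (rule mult_strict_right_mono) (use wB w1 in \<open>auto intro!: zero_less_power\<close>)
  also have "\<dots> = norm w ^ d" using d0 by (simp add: power_eq_if)
  finally show False by simp
qed

lemma finite_neg_margin:
  fixes F :: "complex set"
  assumes "finite F" "\<forall>x\<in>F. Re x < 0"
  shows "\<exists>c>0. \<forall>x\<in>F. Re x < - c"
  using assms
proof (induct F rule: finite_induct)
  case empty thus ?case by (auto intro: exI[of _ 1])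
next
  case (insert a F)
  then obtain c where c: "c > 0" "\<forall>x\<in>F. Re x < - c" by auto
  have a: "Re a < 0" using insert by auto
  show ?case
    by (rule exI[of _ "min c (- Re a / 2)"]) (use c a in auto)
qed

lemma poly_diff_bound:
  fixes P Q :: "complex poly"
  assumes "degree P \<le> d" "degree Q \<le> d" "\<forall>k\<le>d. norm (coeff P k - coeff Q k) \<le> h"
  shows "norm (poly P z - poly Q z) \<le> h * (\<Sum>k\<le>d. norm z ^ k)"
proof -
  have "poly P z - poly Q z = (\<Sum>k\<le>d. (coeff P k - coeff Q k) * z ^ k)"
    using assms by (simp add: poly_sum_upto[of P d] poly_sum_upto[of Q d] sum_subtractf left_diff_distrib)
  hence "norm (poly P z - poly Q z) \<le> (\<Sum>k\<le>d. norm (coeff P k - coeff Q k) * norm z ^ k)"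
    by (simp add: order_trans[OF norm_sum] norm_mult norm_power)
  also have "\<dots> \<le> (\<Sum>k\<le>d. h * norm z ^ k)"
    by (rule sum_mono, rule mult_right_mono) (use assms(3) in auto)
  finally show ?thesis by (simp add: sum_distrib_left)
qed

lemma root_near_root:
  fixes P Q :: "complex poly"
  assumes Q: "lead_coeff Q = 1" "degree Q = d" and dP: "degree P \<le> d" and w: "poly P w = 0"
    and close: "\<forall>k\<le>d. norm (coeff P k - coeff Q k) \<le> h"
    and small: "h * (\<Sum>k\<le>d. norm w ^ k) < e ^ d" and e: "e > 0"
  shows "\<exists>x. poly Q x = 0 \<and> norm (w - x) < e"
proof -
  have "norm (poly Q w) = norm (poly P w - poly Q w)" using w by simp
  also have "\<dots> \<le> h * (\<Sum>k\<le>d. norm w ^ k)"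
    by (rule poly_diff_bound) (use dP Q close in auto)
  finally have "norm (poly Q w) < e ^ degree Q" using small Q by simp
  thus ?thesis using small_value_near_root[OF Q(1) e] by blast
qed

lemma root_bound_near:
  fixes P Q :: "complex poly"
  assumes P: "coeff P d = 1" "degree P = d" and w: "poly P w = 0"
    and close: "\<forall>k<d. norm (coeff P k - coeff Q k) \<le> 1"
  shows "norm w \<le> max 1 (\<Sum>k<d. norm (coeff Q k) + 1)"
proof -
  have "norm (coeff P k) \<le> norm (coeff Q k) + 1" if "k < d" for k
    using norm_triangle_ineq[of "coeff P k - coeff Q k" "coeff Q k"] close that by force
  hence "(\<Sum>k<d. norm (coeff P k)) \<le> (\<Sum>k<d. norm (coeff Q k) + 1)"
    by (intro sum_mono) simp
  thus ?thesis using cauchy_bound[OF P w] by linarith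
qed

lemma eventually_close:
  fixes A0 :: "real^'n^'n"
  assumes "h > 0"
  shows "eventually (\<lambda>A. \<forall>k\<in>{..N}. norm (coeff (cpoly A) k - coeff (cpoly A0) k) < h) (at A0)"
proof (rule eventually_ball_finite[OF finite_atMost], intro ballI)
  fix k
  have "((\<lambda>A. coeff (charpoly A) k) \<longlongrightarrow> coeff (charpoly A0) k) (at A0)"
    using continuous_on_coeff_charpoly[of UNIV k] by (auto simp: continuous_on_def)
  from tendstoD[OF this assms]
  show "eventually (\<lambda>A. norm (coeff (cpoly A) k - coeff (cpoly A0) k) < h) (at A0)"
    by (rule eventually_mono)
       (simp add: cpoly_def coeff_map_poly dist_real_def flip: of_real_diff)
qed

lemma open_if_eventually:
  fixes S :: "'a::topological_space set"
  assumes "\<And>x. x \<in> S \<Longrightarrow> eventually (\<lambda>y. y \<in> S) (at x)"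
  shows "open S"
proof (subst open_subopen, intro ballI)
  fix x assume x: "x \<in> S"
  from assms[OF x] obtain T where T: "open T" "x \<in> T" "\<forall>y\<in>T. y \<noteq> x \<longrightarrow> y \<in> S"
    unfolding eventually_at_topological by auto
  show "\<exists>T. open T \<and> x \<in> T \<and> T \<subseteq> S"
    by (rule exI[of _ T]) (use T x in auto)
qed

text \<open>Stability is an open condition: the finitely many roots of a stable \<open>A0\<close> keep a margin
  \<open>c\<close> from the imaginary axis, and the roots of every nearby \<open>A\<close> lie within \<open>c\<close> of them.\<close>
lemma open_stable: "open {A::real^'n^'n. hurwitz_stable A}"
proof (rule open_if_eventually)
  fix A0 :: "real^'n^'n"
  assume "A0 \<in> {A. hurwitz_stable A}"
  hence st: "\<forall>z. poly (cpoly A0) z = 0 \<longrightarrow> Re z < 0" by (simp add: stable_iff_roots)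
  let ?n = "CARD('n)"
  let ?Q = "cpoly A0"
  have "finite {z. poly ?Q z = 0}" using lead_cpoly[of A0] by (intro poly_roots_finite) auto
  then obtain c where c: "c > 0" "\<forall>x\<in>{z. poly ?Q z = 0}. Re x < - c"
    using finite_neg_margin st by blast
  define R where "R = max 1 (\<Sum>k<?n. norm (coeff ?Q k) + 1)"
  define S where "S = (\<Sum>k\<le>?n. R ^ k)"
  have S0: "S \<ge> 0" unfolding S_def R_def by (auto intro!: sum_nonneg)
  define h where "h = min 1 (c ^ ?n / (S + 1))"
  have h0: "h > 0" unfolding h_def using c S0 by auto
  have hS: "h * S < c ^ ?n"
  proof -
    have "h * S \<le> c ^ ?n / (S + 1) * S" unfolding h_def using S0 by (intro mult_right_mono) auto
    also have "\<dots> < c ^ ?n" using S0 c by (simp add: field_simps)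
    finally show ?thesis .
  qed
  show "eventually (\<lambda>A. A \<in> {A. hurwitz_stable A}) (at A0)"
    using eventually_close[OF h0, of ?n A0]
  proof (rule eventually_mono)
    fix A :: "real^'n^'n"
    assume "\<forall>k\<in>{..?n}. norm (coeff (cpoly A) k - coeff ?Q k) < h"
    hence cl: "\<forall>k\<le>?n. norm (coeff (cpoly A) k - coeff ?Q k) \<le> h" by (auto intro: less_imp_le)
    have "Re w < 0" if w: "poly (cpoly A) w = 0" for w
    proof -
      have "norm w \<le> R" unfolding R_def
        by (rule root_bound_near[OF cpoly_coeff_n degree_cpoly w]) (use cl h_def in force)
      hence "h * (\<Sum>k\<le>?n. norm w ^ k) \<le> h * S" unfolding S_def
        by (intro mult_left_mono sum_mono power_mono) (use h0 in auto)
      hence small: "h * (\<Sum>k\<le>?n. norm w ^ k) < c ^ ?n" using hS by linarith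
      obtain x where x: "poly ?Q x = 0" "norm (w - x) < c"
        using root_near_root[OF lead_cpoly degree_cpoly eq_imp_le[OF degree_cpoly] w cl small c(1)]
        by blast
      have "Re w - Re x \<le> norm (w - x)" using complex_Re_le_cmod[of "w - x"] by simp
      thus "Re w < 0" using c(2) x by auto
    qed
    thus "A \<in> {A. hurwitz_stable A}" by (simp add: stable_iff_roots)
  qed
qed

lemma open_unstable: "open {A::real^'n^'n. \<exists>z. poly (cpoly A) z = 0 \<and> Re z > 0}"
proof (rule open_if_eventually)
  fix A0 :: "real^'n^'n"
  assume "A0 \<in> {A. \<exists>z. poly (cpoly A) z = 0 \<and> Re z > 0}"
  then obtain z where z: "poly (cpoly A0) z = 0" "Re z > 0" by auto
  let ?n = "CARD('n)"
  define S where "S = (\<Sum>k\<le>?n. norm z ^ k)"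
  have S0: "S \<ge> 0" unfolding S_def by (auto intro!: sum_nonneg)
  define h where "h = Re z ^ ?n / (S + 1)"
  have h0: "h > 0" unfolding h_def using z S0 by auto
  have hS: "h * S < Re z ^ ?n" unfolding h_def using S0 z by (simp add: field_simps)
  show "eventually (\<lambda>A. A \<in> {A. \<exists>z. poly (cpoly A) z = 0 \<and> Re z > 0}) (at A0)"
    using eventually_close[OF h0, of ?n A0]
  proof (rule eventually_mono)
    fix A :: "real^'n^'n"
    assume "\<forall>k\<in>{..?n}. norm (coeff (cpoly A) k - coeff (cpoly A0) k) < h"
    hence cl: "\<forall>k\<le>?n. norm (coeff (cpoly A0) k - coeff (cpoly A) k) \<le> h"
      by (auto simp: norm_minus_commute intro: less_imp_le)
    obtain x where x: "poly (cpoly A) x = 0" "norm (z - x) < Re z"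
      using root_near_root[OF lead_cpoly degree_cpoly eq_imp_le[OF degree_cpoly] z(1) cl _ z(2)] hS
      unfolding S_def by blast
    have "Re z - Re x \<le> norm (z - x)" using complex_Re_le_cmod[of "z - x"] by simp
    thus "A \<in> {A. \<exists>z. poly (cpoly A) z = 0 \<and> Re z > 0}" using x by auto
  qed
qed

section \<open>Sufficiency\<close>

text \<open>If \<open>a_0 \<noteq> 0\<close> and \<open>Delta_(n-1) \<noteq> 0\<close>, no eigenvalue lies on the imaginary axis: \<open>0\<close> is excluded by
  \<open>a_0\<close>, and a nonzero imaginary root would force \<open>Delta_(n-1) = 0\<close>.\<close>
lemma no_imaginary_root:
  fixes A :: "real^'n^'n"
  assumes n: "CARD('n) \<ge> 2" and a0: "coeff (charpoly A) 0 \<noteq> 0"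
    and minor: "hurwitz_minor CARD('n) (charpoly A) (CARD('n) - 1) \<noteq> 0"
    and z: "poly (cpoly A) z = 0"
  shows "Re z \<noteq> 0"
proof
  assume re: "Re z = 0"
  show False
  proof (cases "Im z = 0")
    case True
    hence "z = 0" using re by (simp add: complex_eq_iff)
    thus False using z a0 by (simp add: poly_0_coeff_0 cpoly_def coeff_map_poly)
  next
    case False
    have "z = \<i> * complex_of_real (Im z)" using re by (simp add: complex_eq_iff)
    hence "hurwitz_minor CARD('n) (charpoly A) (CARD('n) - 1) = 0"
      using hurwitz_minor_zero_if_imag_root[OF charpoly_coeff_n degree_charpoly n False] z
      by (simp add: cpoly_def)
    thus False using minor by simp
  qed
qed

text \<open>A connected family containing a stable matrix, on which \<open>a_0\<close> and \<open>Delta_(n-1)\<close> never vanish, is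
  stable throughout: it is covered by the two disjoint open sets of stable matrices and of
  matrices with a root in the right half plane.\<close>
lemma sufficiency:
  fixes S :: "(real^'n^'n) set"
  assumes n: "CARD('n) \<ge> 2" and S: "connected S" and some: "\<exists>A\<in>S. hurwitz_stable A"
    and nz: "\<forall>A\<in>S. coeff (charpoly A) 0 \<noteq> 0 \<and>
                    hurwitz_minor CARD('n) (charpoly A) (CARD('n) - 1) \<noteq> 0"
  shows "\<forall>A\<in>S. hurwitz_stable A"
proof -
  let ?U = "{A::real^'n^'n. hurwitz_stable A}"
  let ?N = "{A::real^'n^'n. \<exists>z. poly (cpoly A) z = 0 \<and> Re z > 0}"
  have disj: "?U \<inter> ?N \<inter> S = {}"
    by (auto simp: stable_iff_roots)
  have cover: "S \<subseteq> ?U \<union> ?N"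
  proof
    fix A assume A: "A \<in> S"
    show "A \<in> ?U \<union> ?N"
    proof (cases "hurwitz_stable A")
      case False
      then obtain z where z: "poly (cpoly A) z = 0" "\<not> Re z < 0" by (auto simp: stable_iff_roots)
      have "Re z \<noteq> 0" using no_imaginary_root[OF n _ _ z(1)] nz A by blast
      thus ?thesis using z by auto
    qed simp
  qed
  have "?U \<inter> S = {} \<or> ?N \<inter> S = {}"
    by (rule connectedD[OF S open_stable open_unstable disj cover])
  moreover have "?U \<inter> S \<noteq> {}" using some by auto
  ultimately show ?thesis using cover by blast
qed


section \<open>Necessity\<close>

text \<open>Since \<open>h_ij = a_(n-(2j-i))\<close>, every Hurwitz entry
  then lies in \<open>[0, B x^((2j-i)^2)]\<close>.\<close>
lemma entry_bounds:
  fixes p :: "real poly"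
  assumes p: "coeff p n = 1" "degree p \<le> n" and x: "0 < x" "x \<le> 1" and B: "B \<ge> 1"
    and lb: "\<forall>k\<le>n. x ^ (k^2) \<le> coeff p (n - k)"
    and ub: "\<forall>k\<le>n. coeff p (n - k) \<le> B * x ^ (k^2)"
  shows "0 \<le> hurwitz_entry n p i j \<and> hurwitz_entry n p i j \<le> B * x ^ nat ((2 * int j - int i)^2)"
proof (cases "int n - 2 * int j + int i < 0 \<or> int n - 2 * int j + int i > int n")
  case True
  hence "hurwitz_entry n p i j = 0" unfolding hurwitz_entry_def hcoef_def by auto
  thus ?thesis using B x by auto
next
  case False
  define l where "l = int n - 2 * int j + int i"
  have l: "0 \<le> l" "l \<le> int n" using False l_def by auto
  define k where "k = n - nat l"
  have kn: "k \<le> n" unfolding k_def by simp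
  have nk: "n - k = nat l" unfolding k_def using l by simp
  have he: "hurwitz_entry n p i j = coeff p (n - k)"
    unfolding hurwitz_entry_def l_def[symmetric] nk by (rule hcoef_nonneg[OF p l(1)])
  have "int k = 2 * int j - int i" unfolding k_def l_def using l l_def by linarith
  hence "(2 * int j - int i)^2 = int (k^2)" by (metis of_nat_power)
  hence kk: "nat ((2 * int j - int i)^2) = k^2" by (simp only: nat_int)
  have "0 < x ^ (k^2)" using x by simp
  thus ?thesis unfolding he kk using lb ub kn by force
qed

text \<open>For a permutation \<open>\<sigma>\<close>, \<open>\<Sum> (2\<sigma>(i) - i)^2 = \<Sum> i^2 + 2 \<Sum> (\<sigma>(i) - i)^2\<close>: the exponents of the
  Leibniz terms exceed that of the diagonal term unless \<open>\<sigma> = id\<close>.\<close>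
lemma sum_sq_perm:
  assumes s: "\<sigma> permutes {1..m::nat}"
  shows "(\<Sum>i\<in>{1..m}. (2 * int (\<sigma> i) - int i)^2)
       = (\<Sum>i\<in>{1..m}. int i ^ 2) + 2 * (\<Sum>i\<in>{1..m}. (int (\<sigma> i) - int i)^2)"
proof -
  have r: "(\<Sum>i\<in>{1..m}. int (\<sigma> i) ^ 2) = (\<Sum>i\<in>{1..m}. int i ^ 2)"
  proof -
    have "(\<Sum>i\<in>\<sigma> ` {1..m}. int i ^ 2) = (\<Sum>i\<in>{1..m}. int (\<sigma> i) ^ 2)"
      using sum.reindex[OF permutes_inj_on[OF s], of "\<lambda>i. int i ^ 2"] by (simp add: o_def)
    thus ?thesis using permutes_image[OF s] by simp
  qed
  have "(\<Sum>i\<in>{1..m}. (2 * int (\<sigma> i) - int i)^2)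
      = (\<Sum>i\<in>{1..m}. int i ^ 2 + 2 * (int (\<sigma> i) - int i)^2 + 2 * (int (\<sigma> i) ^ 2 - int i ^ 2))"
    by (rule sum.cong) (auto simp: power2_eq_square algebra_simps)
  also have "\<dots> = (\<Sum>i\<in>{1..m}. int i ^ 2) + 2 * (\<Sum>i\<in>{1..m}. (int (\<sigma> i) - int i)^2)
       + 2 * ((\<Sum>i\<in>{1..m}. int (\<sigma> i) ^ 2) - (\<Sum>i\<in>{1..m}. int i ^ 2))"
    by (simp add: sum.distrib sum_distrib_left sum_subtractf)
  finally show ?thesis using r by simp
qed

lemma hurwitz_diag_prod_ge:
  fixes p :: "real poly"
  assumes p: "coeff p n = 1" "degree p \<le> n" and x: "0 < x" and m: "m \<le> n"
    and lb: "\<forall>k\<le>n. x ^ (k^2) \<le> coeff p (n - k)"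
  shows "x ^ (\<Sum>i\<in>{1..m}. i^2) \<le> (\<Prod>i\<in>{1..m}. hurwitz_entry n p i i)"
proof -
  have "x ^ (\<Sum>i\<in>{1..m}. i^2) = (\<Prod>i\<in>{1..m}. x ^ (i^2))" by (rule power_sum)
  also have "\<dots> \<le> (\<Prod>i\<in>{1..m}. hurwitz_entry n p i i)"
  proof (rule prod_mono)
    fix i assume "i \<in> {1..m}"
    hence i: "i \<le> n" using m by auto
    have e: "int n - 2 * int i + int i = int (n - i)" using i by linarith
    have "hurwitz_entry n p i i = hcoef n p (int (n - i))" unfolding hurwitz_entry_def e ..
    also have "\<dots> = coeff p (n - i)" using hcoef_nonneg[OF p, of "int (n - i)"] by simp
    finally have he: "hurwitz_entry n p i i = coeff p (n - i)" .
    have "x ^ (i^2) \<le> coeff p (n - i)" using lb i by blast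
    thus "0 \<le> x ^ (i^2) \<and> x ^ (i^2) \<le> hurwitz_entry n p i i" unfolding he using x by simp
  qed
  finally show ?thesis .
qed

lemma hurwitz_offdiag_prod_le:
  fixes p :: "real poly"
  assumes p: "coeff p n = 1" "degree p \<le> n" and x: "0 < x" "x \<le> 1" and B: "B \<ge> 1"
    and lb: "\<forall>k\<le>n. x ^ (k^2) \<le> coeff p (n - k)"
    and ub: "\<forall>k\<le>n. coeff p (n - k) \<le> B * x ^ (k^2)"
    and s: "\<sigma> permutes {1..m}" "\<sigma> \<noteq> id"
  shows "\<bar>\<Prod>i\<in>{1..m}. hurwitz_entry n p i (\<sigma> i)\<bar> \<le> B ^ m * x ^ ((\<Sum>i\<in>{1..m}. i^2) + 2)"
proof -
  define E where "E = (\<Sum>i\<in>{1..m}. nat ((2 * int (\<sigma> i) - int i)^2))"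
  have "\<bar>\<Prod>i\<in>{1..m}. hurwitz_entry n p i (\<sigma> i)\<bar>
        \<le> (\<Prod>i\<in>{1..m}. B * x ^ nat ((2 * int (\<sigma> i) - int i)^2))"
    unfolding abs_prod by (rule prod_mono) (use entry_bounds[OF p x B lb ub] in auto)
  also have "\<dots> = B ^ m * x ^ E" unfolding E_def by (simp add: prod.distrib power_sum)
  also have "x ^ E \<le> x ^ ((\<Sum>i\<in>{1..m}. i^2) + 2)"
  proof (rule power_decreasing)
    obtain j where j: "\<sigma> j \<noteq> j" using s(2) by (auto simp: fun_eq_iff)
    have jI: "j \<in> {1..m}" using j s(1) by (meson permutes_not_in)
    have "\<bar>int (\<sigma> j) - int j\<bar> \<ge> 1" using j by linarith
    hence "1 * 1 \<le> \<bar>int (\<sigma> j) - int j\<bar> * \<bar>int (\<sigma> j) - int j\<bar>" by (intro mult_mono) auto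
    hence "1 \<le> (int (\<sigma> j) - int j)^2" by (simp add: power2_eq_square abs_mult[symmetric])
    also have "\<dots> \<le> (\<Sum>i\<in>{1..m}. (int (\<sigma> i) - int i)^2)"
      by (rule member_le_sum) (use jI in auto)
    finally have "1 \<le> (\<Sum>i\<in>{1..m}. (int (\<sigma> i) - int i)^2)" .
    moreover have "int E = (\<Sum>i\<in>{1..m}. int i ^ 2) + 2 * (\<Sum>i\<in>{1..m}. (int (\<sigma> i) - int i)^2)"
      unfolding E_def sum_sq_perm[OF s(1), symmetric] by (simp add: of_nat_sum)
    moreover have "int (\<Sum>i\<in>{1..m}. i^2) = (\<Sum>i\<in>{1..m}. int i ^ 2)" by (simp add: of_nat_sum)
    ultimately have "int ((\<Sum>i\<in>{1..m}. i^2) + 2) \<le> int E" by linarith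
    thus "(\<Sum>i\<in>{1..m}. i^2) + 2 \<le> E" by (simp only: of_nat_le_iff)
  qed (use x in auto)
  hence "B ^ m * x ^ E \<le> B ^ m * x ^ ((\<Sum>i\<in>{1..m}. i^2) + 2)" using B by (intro mult_left_mono) auto
  finally show ?thesis .
qed

lemma hurwitz_minor_pos_if_dominant:
  fixes p :: "real poly"
  assumes p: "coeff p n = 1" "degree p \<le> n" and x: "0 < x" "x \<le> 1" and B: "B \<ge> 1"
    and lb: "\<forall>k\<le>n. x ^ (k^2) \<le> coeff p (n - k)"
    and ub: "\<forall>k\<le>n. coeff p (n - k) \<le> B * x ^ (k^2)"
    and small: "fact (n - 1) * B ^ (n - 1) * x^2 < 1"
  shows "hurwitz_minor n p (n - 1) > 0"
proof -
  let ?m = "n - 1"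
  let ?P = "{\<sigma>. \<sigma> permutes {1..?m}}"
  define S2 where "S2 = (\<Sum>i\<in>{1..?m}. i^2)"
  define T where "T = (\<lambda>\<sigma>. of_int (sign \<sigma>) * (\<Prod>i\<in>{1..?m}. hurwitz_entry n p i (\<sigma> i)) :: real)"
  have finP: "finite ?P" by (rule finite_permutations) simp
  have "hurwitz_minor n p ?m = T id + sum T (?P - {id})"
    unfolding hurwitz_minor_def T_def[symmetric] by (rule sum.remove[OF finP]) (simp add: permutes_id)
  moreover have "T id \<ge> x ^ S2"
    using hurwitz_diag_prod_ge[OF p x(1) _ lb] unfolding T_def S2_def by simp
  moreover have "- sum T (?P - {id}) \<le> fact ?m * B ^ ?m * x^2 * x ^ S2"
  proof -
    have "- sum T (?P - {id}) \<le> (\<Sum>\<sigma>\<in>?P - {id}. \<bar>T \<sigma>\<bar>)"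
      by (simp add: sum_negf[symmetric] sum_mono)
    also have "\<dots> \<le> (\<Sum>\<sigma>\<in>?P - {id}. B ^ ?m * x ^ (S2 + 2))"
    proof (rule sum_mono)
      fix \<sigma> assume "\<sigma> \<in> ?P - {id}"
      moreover have "\<bar>real_of_int (sign \<sigma>)\<bar> = 1" by (metis abs_sign of_int_1 of_int_abs)
      ultimately show "\<bar>T \<sigma>\<bar> \<le> B ^ ?m * x ^ (S2 + 2)"
        using hurwitz_offdiag_prod_le[OF p x B lb ub, of \<sigma> ?m]
        unfolding T_def S2_def abs_mult by simp
    qed
    also have "\<dots> \<le> fact ?m * (B ^ ?m * x ^ (S2 + 2))"
    proof -
      have "card (?P - {id}) \<le> card ?P" by (rule card_mono[OF finP]) auto
      also have "card ?P = fact ?m" by (rule card_permutations) auto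
      finally have "real (card (?P - {id})) \<le> fact ?m" by (metis of_nat_fact of_nat_le_iff)
      moreover have "0 \<le> B ^ ?m * x ^ (S2 + 2)" using B x by auto
      ultimately show ?thesis by (simp add: mult_right_mono)
    qed
    also have "\<dots> = fact ?m * B ^ ?m * x^2 * x ^ S2" unfolding power_add by (simp only: mult_ac)
    finally show ?thesis .
  qed
  moreover have "fact ?m * B ^ ?m * x^2 * x ^ S2 < x ^ S2"
    using mult_strict_right_mono[OF small, of "x ^ S2"] x by simp
  ultimately show ?thesis by linarith
qed

text \<open>The polynomial \<open>\<Prod>_(j<N) (s + x^(2j+1))\<close>: its roots are so widely spread that its coefficients
  satisfy \<open>x^(k^2) \<le> a_(N-k) \<le> 2^N x^(k^2)\<close>.\<close>
definition spread_poly :: "real \<Rightarrow> nat \<Rightarrow> real poly" where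
  "spread_poly x N = (\<Prod>j<N. [:x ^ (2*j+1), 1:])"

lemma coeff_mult_linear:
  "coeff ((q::real poly) * [:r, 1:]) m = r * coeff q m + (if m = 0 then 0 else coeff q (m - 1))"
proof -
  have "q * [:r, 1:] = Polynomial.smult r q + pCons 0 q"
    by (rule poly_eqI) (simp add: mult_pCons_right coeff_pCons split: nat.split)
  thus ?thesis by (cases m) (auto simp: coeff_pCons)
qed

lemma spread_poly_monic: "coeff (spread_poly x N) N = 1 \<and> degree (spread_poly x N) = N"
proof -
  have d: "degree (spread_poly x N) = N" unfolding spread_poly_def by (subst degree_prod_sum_eq) auto
  have "lead_coeff (spread_poly x N) = 1" unfolding spread_poly_def by (simp add: lead_coeff_prod)
  thus ?thesis using d by simp
qed

lemma coeff_bounds_step_const: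
  fixes q :: "real poly"
  assumes x: "0 < x" "x \<le> 1"
    and bd: "x ^ (N^2) \<le> coeff q 0" "coeff q 0 \<le> 2^N * x ^ (N^2)"
  shows "x ^ ((Suc N)^2) \<le> coeff (q * [:x ^ (2*N+1), 1:]) 0 \<and>
         coeff (q * [:x ^ (2*N+1), 1:]) 0 \<le> 2^(Suc N) * x ^ ((Suc N)^2)"
proof -
  let ?r = "x ^ (2*N+1)"
  have r0: "?r > 0" using x by simp
  have e: "coeff (q * [:?r, 1:]) 0 = ?r * coeff q 0" unfolding coeff_mult_linear by simp
  have "(Suc N)^2 = (2*N+1) + N^2" by (simp add: power2_eq_square)
  hence xe: "?r * x ^ (N^2) = x ^ ((Suc N)^2)" by (simp only: power_add)
  have "x ^ ((Suc N)^2) \<le> ?r * coeff q 0" using mult_left_mono[OF bd(1), of ?r] r0 xe by simp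
  moreover have "?r * coeff q 0 \<le> ?r * (2^N * x ^ (N^2))"
    using mult_left_mono[OF bd(2), of ?r] r0 by simp
  moreover have "?r * (2^N * x ^ (N^2)) = 2^N * x ^ ((Suc N)^2)"
    unfolding xe[symmetric] by (simp only: mult_ac)
  moreover have "2^N * x ^ ((Suc N)^2) \<le> 2^(Suc N) * x ^ ((Suc N)^2)" using x by simp
  ultimately show ?thesis unfolding e by linarith
qed

lemma coeff_bounds_step:
  fixes q :: "real poly"
  assumes x: "0 < x" "x \<le> 1" and nn: "\<forall>m. coeff q m \<ge> 0" and dq: "degree q = N"
    and bd: "\<forall>k\<le>N. x ^ (k^2) \<le> coeff q (N - k) \<and> coeff q (N - k) \<le> 2^N * x ^ (k^2)"
    and k: "k \<le> Suc N"
  shows "x ^ (k^2) \<le> coeff (q * [:x ^ (2*N+1), 1:]) (Suc N - k) \<and>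
         coeff (q * [:x ^ (2*N+1), 1:]) (Suc N - k) \<le> 2^(Suc N) * x ^ (k^2)"
proof (cases "k = Suc N")
  case True
  moreover have "x ^ (N^2) \<le> coeff q 0" "coeff q 0 \<le> 2^N * x ^ (N^2)" using bd[rule_format, of N] by simp_all
  ultimately show ?thesis using coeff_bounds_step_const[OF x] by simp
next
  case False
  let ?r = "x ^ (2*N+1)"
  have r0: "?r > 0" using x by simp
  have kN: "k \<le> N" using k False by simp
  hence "Suc N - k = Suc (N - k)" by simp
  hence e: "coeff (q * [:?r, 1:]) (Suc N - k) = ?r * coeff q (Suc (N - k)) + coeff q (N - k)"
    unfolding coeff_mult_linear by simp
  have b: "x ^ (k^2) \<le> coeff q (N - k)" "coeff q (N - k) \<le> 2^N * x ^ (k^2)" using bd kN by auto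
  have t: "?r * coeff q (Suc (N - k)) \<le> 2^N * x ^ (k^2)"
  proof (cases k)
    case 0
    have "coeff q (Suc (N - k)) = 0" using dq 0 by (intro coeff_eq_0) simp
    thus ?thesis using x by simp
  next
    case (Suc k')
    have sk': "Suc (N - k) = N - k'" using Suc kN by simp
    have b': "coeff q (N - k') \<le> 2^N * x ^ (k'^2)" using bd Suc kN by auto
    have "?r * coeff q (Suc (N - k)) \<le> ?r * (2^N * x ^ (k'^2))"
      unfolding sk' using mult_left_mono[OF b', of ?r] r0 by simp
    also have "\<dots> = 2^N * x ^ (2*N+1 + k'^2)" by (simp add: power_add)
    also have "x ^ (2*N+1 + k'^2) \<le> x ^ (k^2)"
    proof (rule power_decreasing)
      show "k^2 \<le> 2*N+1 + k'^2" using Suc kN by (simp add: power2_eq_square)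
    qed (use x in auto)
    hence "2^N * x ^ (2*N+1 + k'^2) \<le> 2^N * x ^ (k^2)" by simp
    finally show ?thesis .
  qed
  have "?r * coeff q (Suc (N - k)) \<ge> 0" using nn r0 by simp
  thus ?thesis unfolding e using b t by simp
qed

lemma spread_poly_bounds:
  assumes x: "0 < x" "x \<le> 1"
  shows "(\<forall>m. coeff (spread_poly x N) m \<ge> 0) \<and>
         (\<forall>k\<le>N. x ^ (k^2) \<le> coeff (spread_poly x N) (N - k) \<and>
                coeff (spread_poly x N) (N - k) \<le> 2^N * x ^ (k^2))"
proof (induct N)
  case 0
  show ?case by (auto simp: spread_poly_def)
next
  case (Suc N)
  have Q: "spread_poly x (Suc N) = spread_poly x N * [:x ^ (2*N+1), 1:]"
    unfolding spread_poly_def by simp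
  have "\<forall>m. coeff (spread_poly x (Suc N)) m \<ge> 0"
    unfolding Q coeff_mult_linear using Suc x by auto
  moreover have "\<forall>k\<le>Suc N. x ^ (k^2) \<le> coeff (spread_poly x (Suc N)) (Suc N - k) \<and>
                  coeff (spread_poly x (Suc N)) (Suc N - k) \<le> 2^(Suc N) * x ^ (k^2)"
    unfolding Q using coeff_bounds_step[OF x _ conjunct2[OF spread_poly_monic]] Suc by blast
  ultimately show ?case by blast
qed

definition spread_mat :: "real \<Rightarrow> ('n \<Rightarrow> nat) \<Rightarrow> real^'n^'n" where
  "spread_mat x h = (\<chi> i j. if i = j then - (x ^ (2 * h i + 1)) else 0)"

lemma charpoly_spread_mat:
  assumes h: "bij_betw h (UNIV :: 'n set) {0..<CARD('n)}"
  shows "charpoly (spread_mat x h :: real^'n^'n) = spread_poly x CARD('n)"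
proof -
  have "charpoly (spread_mat x h) = (\<Prod>i\<in>UNIV. char_mat (spread_mat x h) $ i $ i)"
    unfolding charpoly_char_mat by (rule det_diagonal) (simp add: char_mat_def spread_mat_def)
  also have "\<dots> = (\<Prod>i\<in>UNIV. [:x ^ (2 * h i + 1), 1:])"
    by (rule prod.cong) (auto simp: char_mat_def spread_mat_def)
  also have "\<dots> = (\<Prod>j\<in>{0..<CARD('n)}. [:x ^ (2 * j + 1), 1:])"
    by (rule prod.reindex_bij_betw[OF h])
  finally show ?thesis unfolding spread_poly_def by (simp add: atLeast0LessThan)
qed

lemma spread_mat_stable:
  assumes x: "x > 0"
  shows "hurwitz_stable (spread_mat x h :: real^'n^'n)"
  unfolding stable_iff_roots
proof (intro allI impI)
  fix z assume "poly (cpoly (spread_mat x h :: real^'n^'n)) z = 0"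
  moreover have "poly (cpoly (spread_mat x h :: real^'n^'n)) z =
     (\<Prod>i\<in>UNIV. z + complex_of_real (x ^ (2 * h i + 1)))"
    unfolding poly_cpoly_det by (subst det_diagonal) (auto simp: zmat_def spread_mat_def)
  ultimately obtain i where "z + complex_of_real (x ^ (2 * h i + 1)) = 0" by auto
  hence "z = - complex_of_real (x ^ (2 * h i + 1))" by (simp add: eq_neg_iff_add_eq_0)
  thus "Re z < 0" using x by simp
qed

lemma stable_witness:
  assumes n: "CARD('n) \<ge> 2"
  shows "\<exists>D :: real^'n^'n. hurwitz_stable D \<and> coeff (charpoly D) 0 > 0 \<and>
           hurwitz_minor CARD('n) (charpoly D) (CARD('n) - 1) > 0"
proof -
  let ?n = "CARD('n)"
  obtain h :: "'n \<Rightarrow> nat" where h: "bij_betw h UNIV {0..<?n}"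
    using ex_bij_betw_finite_nat[of "UNIV :: 'n set"] by auto
  define F :: real where "F = fact (?n - 1) * (2 ^ ?n) ^ (?n - 1)"
  have "(1::real) * 1 \<le> F" unfolding F_def by (intro mult_mono fact_ge_1 one_le_power) auto
  hence F1: "F \<ge> 1" by simp
  define x where "x = 1 / (F + 1)"
  have x0: "x > 0" and x1: "x \<le> 1" unfolding x_def using F1 by auto
  have small: "F * x^2 < 1"
  proof -
    have "F * x^2 \<le> F * x" using x0 x1 F1 by (intro mult_left_mono) (auto simp: power2_eq_square)
    also have "F * x < 1" unfolding x_def using F1 by (simp add: field_simps)
    finally show ?thesis .
  qed
  define D where "D = (spread_mat x h :: real^'n^'n)"
  have cD: "charpoly D = spread_poly x ?n" unfolding D_def by (rule charpoly_spread_mat[OF h])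
  note bounds = spread_poly_bounds[OF x0 x1, of ?n] and monic = spread_poly_monic[of x ?n]
  have "hurwitz_minor ?n (charpoly D) (?n - 1) > 0" unfolding cD
  proof (rule hurwitz_minor_pos_if_dominant[OF _ _ x0 x1, where B = "2 ^ ?n"])
    show "coeff (spread_poly x ?n) ?n = 1" "degree (spread_poly x ?n) \<le> ?n" using monic by simp_all
    show "\<forall>k\<le>?n. x ^ (k^2) \<le> coeff (spread_poly x ?n) (?n - k)"
      "\<forall>k\<le>?n. coeff (spread_poly x ?n) (?n - k) \<le> 2 ^ ?n * x ^ (k^2)" using bounds by simp_all
    show "fact (?n - 1) * (2 ^ ?n) ^ (?n - 1) * x^2 < 1" using small unfolding F_def .
  qed simp
  moreover have "coeff (charpoly D) 0 > 0"
  proof -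
    have "x ^ (?n^2) \<le> coeff (spread_poly x ?n) (?n - ?n)" using bounds by blast
    moreover have "x ^ (?n^2) > 0" using x0 by simp
    ultimately show ?thesis unfolding cD by simp
  qed
  moreover have "hurwitz_stable D" unfolding D_def by (rule spread_mat_stable[OF x0])
  ultimately show ?thesis by blast
qed

text \<open>The matrix \<open>-I\<close>, the centre of the star-shaped set of stable matrices.\<close>
definition negI :: "real^'n^'n" where
  "negI = (\<chi> i j. if i = j then -1 else 0)"

text \<open>On the segment from \<open>-I\<close> to \<open>M\<close>, the point \<open>(1-u)(-I) + uM\<close> has the eigenvalues
  \<open>u \<lambda> - (1 - u)\<close>, \<open>\<lambda>\<close> an eigenvalue of \<open>M\<close>.\<close>
lemma cmat_segment:
  "cmat ((1 - u) *\<^sub>R negI + u *\<^sub>R M) *v v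
     = complex_of_real u *s (cmat M *v v) - complex_of_real (1 - u) *s v"
proof -
  have "(cmat ((1 - u) *\<^sub>R negI + u *\<^sub>R M) *v v) $ i
      = (\<Sum>j\<in>UNIV. (if i = j then - complex_of_real (1-u) * v $ j else 0)
             + complex_of_real u * (complex_of_real (M $ i $ j) * v $ j))" for i
    unfolding cmat_def matrix_vector_mult_def vec_lambda_beta
    by (intro sum.cong refl) (auto simp: negI_def algebra_simps)
  thus ?thesis
    by (simp add: Finite_Cartesian_Product.vec_eq_iff sum.distrib if_distrib[of "\<lambda>x. x * _"]
        matrix_vector_mult_def sum_distrib_left cmat_def cong: if_cong) (simp add: algebra_simps)
qed

lemma negI_stable: "hurwitz_stable negI"
  unfolding hurwitz_stable_cmat
proof (intro allI impI, elim conjE)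
  fix z :: complex and v :: "complex^'n"
  assume v0: "v \<noteq> 0" and ev: "cmat negI *v v = z *s v"
  have "cmat negI *v v = - v" using cmat_segment[of 0 negI v] by simp
  hence "(z + 1) *s v = 0" using ev by (simp add: vector_sadd_rdistrib)
  hence "z = -1" using v0 vector_mul_eq_0 by (metis add_eq_0_iff2)
  thus "Re z < 0" by simp
qed

text \<open>\<dots> and so is every point of a segment from \<open>-I\<close> to a stable \<open>M\<close>, since
  \<open>Re (u \<lambda> - (1 - u)) < 0\<close> whenever \<open>Re \<lambda> < 0\<close>.\<close>
lemma segment_stable:
  fixes M P :: "real^'n^'n"
  assumes M: "hurwitz_stable M" and P: "P \<in> closed_segment negI M"
  shows "hurwitz_stable P"
proof -
  obtain u where u: "0 \<le> u" "u \<le> 1" "P = (1 - u) *\<^sub>R negI + u *\<^sub>R M"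
    using P by (auto simp: in_segment)
  show ?thesis
  proof (cases "u = 0")
    case True thus ?thesis using u negI_stable by simp
  next
    case False
    hence u0: "u > 0" using u by simp
    show ?thesis unfolding hurwitz_stable_cmat
    proof (intro allI impI, elim conjE)
      fix z :: complex and v :: "complex^'n"
      assume v0: "v \<noteq> 0" and ev: "cmat P *v v = z *s v"
      let ?l = "(z + complex_of_real (1 - u)) / complex_of_real u"
      have eq: "complex_of_real u *s (cmat M *v v) = (z + complex_of_real (1 - u)) *s v"
        using ev unfolding u(3) cmat_segment
        by (simp add: algebra_simps scaleR_conv_of_real vector_sadd_rdistrib)
      have "cmat M *v v = (1 / complex_of_real u) *s (complex_of_real u *s (cmat M *v v))"
        using u0 by (simp add: vector_smult_assoc)
      also have "\<dots> = ?l *s v" unfolding eq vector_smult_assoc by simp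
      finally have "cmat M *v v = ?l *s v" .
      hence "Re ?l < 0" using M v0 unfolding hurwitz_stable_cmat by blast
      hence "(Re z + (1 - u)) / u < 0" by (simp add: Re_divide_of_real)
      thus "Re z < 0" using u u0 by (simp add: divide_less_0_iff)
    qed
  qed
qed

lemma connected_stable: "connected {A :: real^'n^'n. hurwitz_stable A}"
proof (rule starlike_imp_connected)
  have "closed_segment negI M \<subseteq> {A. hurwitz_stable A}" if "hurwitz_stable M" for M :: "real^'n^'n"
    using segment_stable[OF that] by blast
  thus "starlike {A :: real^'n^'n. hurwitz_stable A}"
    unfolding starlike_def using negI_stable by blast
qed

text \<open>On a stable matrix neither \<open>a_0\<close> (\<open>0\<close> is not a root) nor \<open>Delta_(n-1)\<close> (no opposite pair of
  roots) vanishes.\<close>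
lemma stable_nonzero:
  fixes A :: "real^'n^'n"
  assumes n: "CARD('n) \<ge> 2" and st: "hurwitz_stable A"
  shows "coeff (charpoly A) 0 \<noteq> 0 \<and> hurwitz_minor CARD('n) (charpoly A) (CARD('n) - 1) \<noteq> 0"
proof
  have r: "\<forall>z. poly (cpoly A) z = 0 \<longrightarrow> Re z < 0" using st by (simp add: stable_iff_roots)
  show "coeff (charpoly A) 0 \<noteq> 0"
  proof
    assume "coeff (charpoly A) 0 = 0"
    hence "poly (cpoly A) 0 = 0" by (simp add: poly_0_coeff_0 cpoly_def coeff_map_poly)
    thus False using r by fastforce
  qed
  show "hurwitz_minor CARD('n) (charpoly A) (CARD('n) - 1) \<noteq> 0"
  proof
    assume "hurwitz_minor CARD('n) (charpoly A) (CARD('n) - 1) = 0"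
    then obtain z where "poly (cpoly A) z = 0" "poly (cpoly A) (-z) = 0"
      using hurwitz_minor_zero_imp_opposite_roots[OF charpoly_coeff_n degree_charpoly n]
      unfolding cpoly_def by blast
    hence "Re z < 0" "Re (-z) < 0" using r by blast+
    thus False by simp
  qed
qed

lemma connected_pos_if_nonzero:
  fixes f :: "'a::topological_space \<Rightarrow> real"
  assumes K: "connected K" and f: "continuous_on K f" and nz: "\<forall>y\<in>K. f y \<noteq> 0"
    and a: "a \<in> K" and b: "b \<in> K" and fb: "f b > 0"
  shows "f a > 0"
proof (rule ccontr)
  assume "\<not> f a > 0"
  hence "f a < 0" using nz a by force
  moreover have "connected (f ` K)" by (rule connected_continuous_image[OF f K])
  ultimately have "0 \<in> f ` K"
    using a b fb unfolding connected_iff_interval by (meson imageI less_imp_le)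
  thus False using nz by auto
qed

text \<open>Necessity: \<open>a_0\<close> and \<open>Delta_(n-1)\<close> are continuous and nonvanishing on the connected set of
  stable matrices and positive at the stable witness, hence positive on every stable matrix.\<close>
lemma necessity:
  fixes A :: "real^'n^'n"
  assumes n: "CARD('n) \<ge> 2" and st: "hurwitz_stable A"
  shows "coeff (charpoly A) 0 > 0 \<and> hurwitz_minor CARD('n) (charpoly A) (CARD('n) - 1) > 0"
proof -
  obtain D :: "real^'n^'n" where D: "hurwitz_stable D" "coeff (charpoly D) 0 > 0"
      "hurwitz_minor CARD('n) (charpoly D) (CARD('n) - 1) > 0"
    using stable_witness[OF n] by blast
  note nz = stable_nonzero[OF n]
  have "coeff (charpoly A) 0 > 0"
    by (rule connected_pos_if_nonzero[OF connected_stable continuous_on_coeff_charpoly _ _ _ D(2)])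
       (use nz st D in auto)
  moreover have "hurwitz_minor CARD('n) (charpoly A) (CARD('n) - 1) > 0"
    by (rule connected_pos_if_nonzero[OF connected_stable continuous_on_hurwitz_minor _ _ _ D(3)])
       (use nz st D in auto)
  ultimately show ?thesis ..
qed

theorem theorem1:
  fixes S :: "(real^'n^'n) set"
  assumes "CARD('n) \<ge> 2"
    and "connected S"
    and "\<exists>A\<in>S. hurwitz_stable A"
  shows "(\<forall>A\<in>S. hurwitz_stable A) \<longleftrightarrow>
         (\<forall>A\<in>S. coeff (charpoly A) 0 > 0 \<and>
                 hurwitz_minor CARD('n) (charpoly A) (CARD('n) - 1) > 0)"
proof
  assume "\<forall>A\<in>S. hurwitz_stable A"
  thus "\<forall>A\<in>S. coeff (charpoly A) 0 > 0 \<and> hurwitz_minor CARD('n) (charpoly A) (CARD('n) - 1) > 0"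
    using necessity[OF assms(1)] by blast
next
  assume "\<forall>A\<in>S. coeff (charpoly A) 0 > 0 \<and> hurwitz_minor CARD('n) (charpoly A) (CARD('n) - 1) > 0"
  thus "\<forall>A\<in>S. hurwitz_stable A"
    by (intro sufficiency[OF assms]) auto
qed

end
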